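(* Let $n\ge2$, $R>0$, $\varepsilon>0$, and let $f$ be such that $r^{n-1}f\in L^1((0,R))$. Then the problem $-\varepsilon r^{n-1}\Big(\frac{1}{r^{n-1}}w_r\Big)_r+\frac{1}{n r^{n(n-1)}}w^n=L_f$ in $(0,R)$, $w(0)=w_r(0)=0$, $w_r(R)=\varepsilon R^{n-1}$, has at most one nonnegative classical solution.
   Context: $L_f(s):=\int_0^s t^{n-1}f(t)\,dt$. Subscripts $r$ denote derivatives in $r$. A classical solution is a twice differentiable function on $(0,R)$, continuously differentiable up to the endpoints, satisfying the equation and boundary conditions pointwise. (This problem is satisfied by $w=r^{n-1}u^\varepsilon_r$ for radial vanishing moment approximations $u^\varepsilon$ of the Monge–Ampère equation.) *)

theory Defs
  imports "HOL-Analysis.Analysis"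
begin

definition Lf :: "nat \<Rightarrow> (real \<Rightarrow> real) \<Rightarrow> real \<Rightarrow> real" where
  "Lf n f s = integral {0..s} (\<lambda>t. t ^ (n - 1) * f t)"

definition classical_solution ::
  "nat \<Rightarrow> real \<Rightarrow> real \<Rightarrow> (real \<Rightarrow> real) \<Rightarrow> (real \<Rightarrow> real) \<Rightarrow> bool" where
  "classical_solution n \<epsilon> R f w \<longleftrightarrow>
     (\<exists>w'. (\<forall>r\<in>{0..R}. (w has_real_derivative w' r) (at r within {0..R}))
        \<and> continuous_on {0..R} w'
        \<and> (\<forall>r\<in>{0<..<R}. w' differentiable (at r))
        \<and> (\<forall>r\<in>{0<..<R}.
              - \<epsilon> * r ^ (n - 1) * deriv (\<lambda>s. w' s / s ^ (n - 1)) r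
              + w r ^ n / (real n * r ^ (n * (n - 1))) = Lf n f r)
        \<and> w 0 = 0 \<and> w' 0 = 0 \<and> w' R = \<epsilon> * R ^ (n - 1))"

end

theory Submission
  imports Defs
begin

text \<open>
  For two nonnegative solutions the source term \<open>L_f\<close> cancels from the difference of the
  equations, so \<open>u = w1 - w2\<close> satisfies
  \<open>\<epsilon> r^(n-1) (u_r / r^(n-1))_r = (w1^n - w2^n) / (n r^(n(n-1)))\<close>. Since \<open>t \<mapsto> t^n\<close> is
  strictly increasing on \<open>[0,\<infinity>)\<close>, the quotient \<open>u_r / r^(n-1)\<close> strictly increases wherever
  \<open>u > 0\<close>. A positive maximum of \<open>u\<close> sits at some \<open>r0 \<in> (0,R]\<close> with \<open>u_r(r0) = 0\<close>
  (interior maximum, or \<open>u_r(R) = 0\<close>); to the left of \<open>r0\<close> the quotient, hence \<open>u_r\<close>, is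
  then negative, so \<open>u\<close> is larger there than at its maximum. Thus \<open>w1 \<le> w2\<close>, and by
  symmetry \<open>w1 = w2\<close>.
\<close>

lemma has_real_derivative_at_interior:
  assumes "(f has_real_derivative f') (at x within {a..b})" and "a < x" and "x < b"
  shows "(f has_real_derivative f') (at x)"
  using assms at_within_Icc_at by metis

lemma continuous_on_pos_left_interval:
  fixes u :: "real \<Rightarrow> real"
  assumes "continuous_on {0..R} u" and "r0 \<in> {0..R}" and "r0 > 0" and "u r0 > 0"
  obtains a where "0 < a" and "a < r0" and "\<And>x. x \<in> {a..r0} \<Longrightarrow> u x > 0"
proof -
  have "continuous (at r0 within {0..R}) u"
    using assms(1,2) continuous_on_eq_continuous_within by blast
  then obtain d where d: "d > 0"
    and close: "\<And>y. y \<in> {0..R} \<Longrightarrow> dist y r0 < d \<Longrightarrow> dist (u y) (u r0) < u r0"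
    using assms(4) unfolding continuous_within_eps_delta by blast
  define a where "a = max (r0 - d/2) (r0/2)"
  show ?thesis
  proof
    show "0 < a" "a < r0" using d assms(3) by (auto simp: a_def)
    show "u x > 0" if "x \<in> {a..r0}" for x
    proof -
      have "x \<in> {0..R}" "dist x r0 < d"
        using that assms(2,3) d by (auto simp: a_def dist_real_def)
      then show ?thesis using close[of x] by (auto simp: dist_real_def)
    qed
  qed
qed

lemma weighted_maximum_principle:
  fixes u u' D :: "real \<Rightarrow> real" and R :: real and k :: nat
  assumes R: "R > 0"
    and has_deriv: "\<And>r. r \<in> {0..R} \<Longrightarrow> (u has_real_derivative u' r) (at r within {0..R})"
    and cont_u': "continuous_on {0..R} u'"
    and quotient_deriv: "\<And>r. r \<in> {0<..<R} \<Longrightarrow> ((\<lambda>s. u' s / s ^ k) has_real_derivative D r) (at r)"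
    and D_pos: "\<And>r. r \<in> {0<..<R} \<Longrightarrow> u r > 0 \<Longrightarrow> D r > 0"
    and u0: "u 0 = 0" and u'R: "u' R = 0"
    and r: "r \<in> {0..R}"
  shows "u r \<le> 0"
proof (rule ccontr)
  assume "\<not> u r \<le> 0"
  define V where "V s = u' s / s ^ k" for s
  have cont_u: "continuous_on {0..R} u"
    using has_deriv DERIV_continuous continuous_on_eq_continuous_within by blast
  obtain r0 where r0: "r0 \<in> {0..R}" and max: "\<And>y. y \<in> {0..R} \<Longrightarrow> u y \<le> u r0"
    using continuous_attains_sup[OF compact_Icc _ cont_u] R by fastforce
  have u_r0: "u r0 > 0" using \<open>\<not> u r \<le> 0\<close> max[OF r] by linarith
  then have r0_pos: "r0 > 0" using r0 u0 by (cases "r0 = 0") auto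
  have "u' r0 = 0"
  proof (cases "r0 = R")
    case False
    then have "r0 < R" using r0 by simp
    show ?thesis
    proof (rule DERIV_local_max)
      show "(u has_real_derivative u' r0) (at r0)"
        using has_real_derivative_at_interior has_deriv r0 r0_pos \<open>r0 < R\<close> by blast
      show "0 < min r0 (R - r0)" using r0_pos \<open>r0 < R\<close> by simp
      show "\<forall>y. \<bar>r0 - y\<bar> < min r0 (R - r0) \<longrightarrow> u y \<le> u r0"
        by (auto intro!: max simp: abs_less_iff)
    qed
  qed (use u'R in simp)
  then have V_r0: "V r0 = 0" by (simp add: V_def)
  obtain a where a: "0 < a" "a < r0" and u_pos: "\<And>x. x \<in> {a..r0} \<Longrightarrow> u x > 0"
    using continuous_on_pos_left_interval[OF cont_u r0 r0_pos u_r0] by blast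
  have cont_V: "continuous_on {x..r0} V" if "x > 0" for x
    unfolding V_def using that r0
    by (intro continuous_intros continuous_on_subset[OF cont_u']) auto
  have u'_neg: "u' x < 0" if x: "a < x" "x < r0" for x
  proof -
    have "V x < V r0"
    proof (rule DERIV_pos_imp_increasing_open[OF \<open>x < r0\<close> _ cont_V])
      fix y assume "x < y" "y < r0"
      then have "y \<in> {0<..<R}" "u y > 0" using a x r0 u_pos by auto
      then show "\<exists>l. (V has_real_derivative l) (at y) \<and> l > 0"
        using quotient_deriv D_pos unfolding V_def by blast
    qed (use a x in auto)
    then have "u' x / x ^ k < 0" using V_r0 by (simp only: V_def)
    then show ?thesis using a x by (simp add: divide_less_0_iff)
  qed
  have "u a > u r0"
  proof (rule DERIV_neg_imp_decreasing_open[OF \<open>a < r0\<close>])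
    fix x assume "a < x" "x < r0"
    then have "(u has_real_derivative u' x) (at x)"
      using has_real_derivative_at_interior[OF has_deriv] a r0 by simp
    then show "\<exists>l. (u has_real_derivative l) (at x) \<and> l < 0"
      using u'_neg \<open>a < x\<close> \<open>x < r0\<close> by blast
  next
    show "continuous_on {a..r0} u"
      using continuous_on_subset[OF cont_u] a r0 by auto
  qed
  then show False using max[of a] a r0 by auto
qed

lemma DERIV_deriv_divide_power:
  fixes g :: "real \<Rightarrow> real"
  assumes "g differentiable (at r)" and "r \<noteq> 0"
  shows "((\<lambda>s. g s / s ^ k) has_real_derivative deriv (\<lambda>s. g s / s ^ k) r) (at r)"
proof -
  have "(\<lambda>s. g s / s ^ k) differentiable (at r)"
    using assms by (intro differentiable_divide differentiable_power differentiable_ident) auto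
  then show ?thesis using DERIV_deriv_iff_real_differentiable by blast
qed

lemma classical_solutionE:
  assumes "classical_solution n \<epsilon> R f w"
  obtains w' where "\<And>r. r \<in> {0..R} \<Longrightarrow> (w has_real_derivative w' r) (at r within {0..R})"
    and "continuous_on {0..R} w'"
    and "\<And>r. r \<in> {0<..<R} \<Longrightarrow>
      ((\<lambda>s. w' s / s ^ (n - 1)) has_real_derivative deriv (\<lambda>s. w' s / s ^ (n - 1)) r) (at r)"
    and "\<And>r. r \<in> {0<..<R} \<Longrightarrow>
      \<epsilon> * r ^ (n - 1) * deriv (\<lambda>s. w' s / s ^ (n - 1)) r
        = w r ^ n / (real n * r ^ (n * (n - 1))) - Lf n f r"
    and "w 0 = 0" and "w' R = \<epsilon> * R ^ (n - 1)"
proof -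
  obtain w' where d: "\<forall>r\<in>{0..R}. (w has_real_derivative w' r) (at r within {0..R})"
    and c: "continuous_on {0..R} w'" and diff: "\<forall>r\<in>{0<..<R}. w' differentiable (at r)"
    and eq: "\<forall>r\<in>{0<..<R}. - \<epsilon> * r ^ (n - 1) * deriv (\<lambda>s. w' s / s ^ (n - 1)) r
              + w r ^ n / (real n * r ^ (n * (n - 1))) = Lf n f r"
    and b: "w 0 = 0" "w' R = \<epsilon> * R ^ (n - 1)"
    using assms unfolding classical_solution_def by blast
  show ?thesis
  proof (rule that[OF _ c _ _ b])
    show "(w has_real_derivative w' r) (at r within {0..R})" if "r \<in> {0..R}" for r
      using d that by blast
    show "((\<lambda>s. w' s / s ^ (n - 1)) has_real_derivative deriv (\<lambda>s. w' s / s ^ (n - 1)) r) (at r)"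
      if "r \<in> {0<..<R}" for r
      using DERIV_deriv_divide_power diff that by auto
    show "\<epsilon> * r ^ (n - 1) * deriv (\<lambda>s. w' s / s ^ (n - 1)) r
        = w r ^ n / (real n * r ^ (n * (n - 1))) - Lf n f r" if "r \<in> {0<..<R}" for r
      using eq that by (simp add: algebra_simps)
  qed
qed

lemma classical_solution_le_nonneg_solution:
  fixes n :: nat and R \<epsilon> :: real and f w1 w2 :: "real \<Rightarrow> real"
  assumes n: "n \<ge> 1" and R: "R > 0" and \<epsilon>: "\<epsilon> > 0"
    and sol1: "classical_solution n \<epsilon> R f w1"
    and sol2: "classical_solution n \<epsilon> R f w2" and w2_nonneg: "\<And>r. r \<in> {0..R} \<Longrightarrow> w2 r \<ge> 0"
    and r: "r \<in> {0..R}"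
  shows "w1 r \<le> w2 r"
proof -
  obtain w1' where d1: "\<And>r. r \<in> {0..R} \<Longrightarrow> (w1 has_real_derivative w1' r) (at r within {0..R})"
    and c1: "continuous_on {0..R} w1'"
    and dv1: "\<And>r. r \<in> {0<..<R} \<Longrightarrow>
      ((\<lambda>s. w1' s / s ^ (n - 1)) has_real_derivative deriv (\<lambda>s. w1' s / s ^ (n - 1)) r) (at r)"
    and eq1: "\<And>r. r \<in> {0<..<R} \<Longrightarrow> \<epsilon> * r ^ (n - 1) * deriv (\<lambda>s. w1' s / s ^ (n - 1)) r
        = w1 r ^ n / (real n * r ^ (n * (n - 1))) - Lf n f r"
    and b1: "w1 0 = 0" "w1' R = \<epsilon> * R ^ (n - 1)"
    using sol1 by (rule classical_solutionE) blast
  obtain w2' where d2: "\<And>r. r \<in> {0..R} \<Longrightarrow> (w2 has_real_derivative w2' r) (at r within {0..R})"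
    and c2: "continuous_on {0..R} w2'"
    and dv2: "\<And>r. r \<in> {0<..<R} \<Longrightarrow>
      ((\<lambda>s. w2' s / s ^ (n - 1)) has_real_derivative deriv (\<lambda>s. w2' s / s ^ (n - 1)) r) (at r)"
    and eq2: "\<And>r. r \<in> {0<..<R} \<Longrightarrow> \<epsilon> * r ^ (n - 1) * deriv (\<lambda>s. w2' s / s ^ (n - 1)) r
        = w2 r ^ n / (real n * r ^ (n * (n - 1))) - Lf n f r"
    and b2: "w2 0 = 0" "w2' R = \<epsilon> * R ^ (n - 1)"
    using sol2 by (rule classical_solutionE) blast
  define v1 where "v1 = (\<lambda>s. w1' s / s ^ (n - 1))"
  define v2 where "v2 = (\<lambda>s. w2' s / s ^ (n - 1))"
  have "w1 r - w2 r \<le> 0"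
  proof (rule weighted_maximum_principle[where u' = "\<lambda>s. w1' s - w2' s" and k = "n - 1"
        and D = "\<lambda>s. deriv v1 s - deriv v2 s", OF R _ _ _ _ _ _ r])
    show "((\<lambda>s. w1 s - w2 s) has_real_derivative w1' x - w2' x) (at x within {0..R})"
      if "x \<in> {0..R}" for x
      using d1 d2 that by (intro DERIV_diff)
    show "continuous_on {0..R} (\<lambda>s. w1' s - w2' s)" using c1 c2 by (intro continuous_on_diff)
    show "((\<lambda>s. (w1' s - w2' s) / s ^ (n - 1)) has_real_derivative deriv v1 x - deriv v2 x) (at x)"
      if "x \<in> {0<..<R}" for x
    proof -
      have "((\<lambda>s. v1 s - v2 s) has_real_derivative deriv v1 x - deriv v2 x) (at x)"
        using dv1 dv2 that unfolding v1_def v2_def by (intro DERIV_diff)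
      moreover have "(\<lambda>s. v1 s - v2 s) = (\<lambda>s. (w1' s - w2' s) / s ^ (n - 1))"
        by (simp add: v1_def v2_def diff_divide_distrib)
      ultimately show ?thesis by simp
    qed
    show "deriv v1 x - deriv v2 x > 0" if x: "x \<in> {0<..<R}" and pos: "w1 x - w2 x > 0" for x
    proof -
      define N where "N = real n * x ^ (n * (n - 1))"
      have "N > 0" using x n by (simp add: N_def)
      have "w2 x ^ n < w1 x ^ n"
        using pos n w2_nonneg[of x] x by (intro power_strict_mono) auto
      then have "\<epsilon> * x ^ (n - 1) * (deriv v1 x - deriv v2 x) > 0"
        using eq1[OF x] eq2[OF x] \<open>N > 0\<close>
        unfolding v1_def v2_def N_def [symmetric] by (simp add: right_diff_distrib divide_strict_right_mono)
      moreover have "\<epsilon> * x ^ (n - 1) > 0" using \<epsilon> x by simp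
      ultimately show ?thesis by (metis diff_gt_0_iff_gt zero_less_mult_pos)
    qed
    show "w1 0 - w2 0 = 0" "w1' R - w2' R = 0" using b1 b2 by simp_all
  qed
  then show ?thesis by simp
qed

theorem theorem3p3:
  fixes n :: nat and R \<epsilon> :: real and f :: "real \<Rightarrow> real"
  assumes "n \<ge> 2" and "R > 0" and "\<epsilon> > 0"
    and "(\<lambda>t. t ^ (n - 1) * f t) absolutely_integrable_on {0<..<R}"
  shows "\<forall>w1 w2. classical_solution n \<epsilon> R f w1 \<and> (\<forall>r\<in>{0..R}. w1 r \<ge> 0)
            \<and> classical_solution n \<epsilon> R f w2 \<and> (\<forall>r\<in>{0..R}. w2 r \<ge> 0)
            \<longrightarrow> (\<forall>r\<in>{0..R}. w1 r = w2 r)"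
proof (intro allI impI ballI)
  fix w1 w2 r
  assume sols: "classical_solution n \<epsilon> R f w1 \<and> (\<forall>r\<in>{0..R}. w1 r \<ge> 0)
            \<and> classical_solution n \<epsilon> R f w2 \<and> (\<forall>r\<in>{0..R}. w2 r \<ge> 0)"
    and r: "r \<in> {0..R}"
  have n: "n \<ge> 1" using \<open>n \<ge> 2\<close> by simp
  show "w1 r = w2 r"
    using classical_solution_le_nonneg_solution[OF n \<open>R > 0\<close> \<open>\<epsilon> > 0\<close> _ _ _ r] sols
    by (meson order_antisym)
qed

end
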